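(* Let $f=a_0+ a_{1}z+\cdots+a_m z^m\in \mathbb{Z}[z]$ be primitive (the greatest common divisor of its coefficients is $1$). Suppose there exist positive real numbers $\alpha<\beta$ and an index $j\in \{0,1,\ldots,m\}$ such that \[ |a_j|\alpha^j >\left(\frac{\beta}{\alpha}\right)^{m-j}\sum_{i=0,\, i\neq j}^{m} |a_i|\alpha^i. \] If there exist natural numbers $n$ and $d$ with $\beta-d\geq n\geq \alpha+d$ such that either $|f(n)|/d$ is a prime, or $|f(n)|/d$ is a prime power coprime to $|f'(n)|$, then $f$ is irreducible in $\mathbb{Z}[z]$.
   Context: $f'$ denotes the derivative of $f$. Natural numbers are positive integers. *)

theory Defs
  imports "HOL-Computational_Algebra.Computational_Algebra"
begin

end

theory Submission
  imports Defs
begin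

(* The dominance hypothesis keeps every complex root z of f outside the annulus alpha <= |z| <= beta,
   so each root is more than d away from n. A non-constant integer factor g of f therefore has
   |g(n)| >= |lc g| * prod |n - z| > d. If f = g h with both factors non-constant, then
   q * d = |g(n)| |h(n)| with q = |f(n)|/d, and q divides one of the two values: directly when q is
   prime, and when q = p^k because p cannot divide both g(n) and h(n) without dividing
   f'(n) = g'(n) h(n) + g(n) h'(n). The other value is then at most d, a contradiction. *)

lemma map_poly_of_int_mult:
  "map_poly (of_int :: int \<Rightarrow> 'a::comm_ring_1) (p * q) = map_poly of_int p * map_poly of_int q"
  by (rule poly_eqI) (simp add: coeff_map_poly coeff_mult)

lemma poly_map_poly_of_int:
  "poly (map_poly (of_int :: int \<Rightarrow> 'a::comm_ring_1) p) (of_int x) = of_int (poly p x)"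
  by (induct p) (simp_all add: map_poly_pCons)

lemma poly_nonzero_in_annulus:
  fixes p :: "complex poly" and \<alpha> \<beta> :: real
  assumes "0 < \<alpha>" and "\<alpha> \<le> cmod z" and "cmod z \<le> \<beta>"
    and j: "j \<le> degree p"
    and dom: "norm (coeff p j) * \<alpha> ^ j >
              (\<beta> / \<alpha>) ^ (degree p - j) * (\<Sum>i\<in>{0..degree p} - {j}. norm (coeff p i) * \<alpha> ^ i)"
  shows "poly p z \<noteq> 0"
proof
  assume root: "poly p z = 0"
  define m where "m = degree p"
  define A where "A = {0..m} - {j}"
  define t where "t = cmod z / \<alpha>"
  have t: "1 \<le> t" "t \<le> \<beta> / \<alpha>"
    using assms(1-3) by (simp_all add: t_def divide_right_mono)
  have z: "cmod z = \<alpha> * t"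
    using assms(1) by (simp add: t_def)
  have power_bound: "t ^ i \<le> t ^ j * (\<beta> / \<alpha>) ^ (m - j)" if "i \<le> m" for i
  proof -
    have "t ^ i \<le> t ^ m" using t that by (simp add: power_increasing)
    also have "\<dots> = t ^ j * t ^ (m - j)" using j by (simp add: m_def flip: power_add)
    also have "\<dots> \<le> t ^ j * (\<beta> / \<alpha>) ^ (m - j)"
      using t by (intro mult_left_mono power_mono) auto
    finally show ?thesis .
  qed
  have "cmod (\<Sum>i\<in>A. coeff p i * z ^ i) \<le> (\<Sum>i\<in>A. cmod (coeff p i * z ^ i))"
    by (rule norm_sum)
  also have "\<dots> = (\<Sum>i\<in>A. norm (coeff p i) * \<alpha> ^ i * t ^ i)"
    by (simp add: norm_mult norm_power z power_mult_distrib mult.assoc)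
  also have "\<dots> \<le> (\<Sum>i\<in>A. norm (coeff p i) * \<alpha> ^ i * (t ^ j * (\<beta> / \<alpha>) ^ (m - j)))"
    using power_bound assms(1) by (intro sum_mono mult_left_mono) (auto simp: A_def)
  also have "\<dots> = t ^ j * ((\<beta> / \<alpha>) ^ (m - j) * (\<Sum>i\<in>A. norm (coeff p i) * \<alpha> ^ i))"
    by (simp add: sum_distrib_left sum_distrib_right mult_ac)
  also have "\<dots> < t ^ j * (norm (coeff p j) * \<alpha> ^ j)"
    using dom t by (intro mult_strict_left_mono) (auto simp: A_def m_def)
  also have "\<dots> = cmod (coeff p j * z ^ j)"
    by (simp add: norm_mult norm_power z power_mult_distrib mult_ac)
  finally have less: "cmod (\<Sum>i\<in>A. coeff p i * z ^ i) < cmod (coeff p j * z ^ j)" .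
  have "poly p z = coeff p j * z ^ j + (\<Sum>i\<in>A. coeff p i * z ^ i)"
    unfolding poly_altdef A_def m_def using j
    by (simp add: atLeast0AtMost sum.remove[of "{..degree p}" j])
  with root have "coeff p j * z ^ j = - (\<Sum>i\<in>A. coeff p i * z ^ i)"
    by (simp add: eq_neg_iff_add_eq_0)
  with less show False by simp
qed

lemma norm_poly_gt_if_roots_far:
  fixes p :: "complex poly" and d :: real
  assumes "degree p \<ge> 1" and "norm (lead_coeff p) \<ge> 1" and "d \<ge> 1"
    and far: "\<And>z. poly p z = 0 \<Longrightarrow> cmod (x - z) > d"
  shows "cmod (poly p x) > d"
proof -
  obtain root where decomp: "smult (lead_coeff p) (\<Prod>i<degree p. [:-root i, 1:]) = p"
    by (rule complex_poly_decompose')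
  have poly_p: "poly p y = lead_coeff p * (\<Prod>i<degree p. y - root i)" for y
    by (subst decomp[symmetric]) (simp add: poly_prod)
  have root_far: "d < cmod (x - root i)" if "i < degree p" for i
    using far[of "root i"] that by (auto simp: poly_p)
  have "d \<le> d ^ degree p"
    using assms(1,3) by (metis power_increasing power_one_right)
  also have "\<dots> = (\<Prod>i<degree p. d)" by simp
  also have "\<dots> < (\<Prod>i<degree p. cmod (x - root i))"
  proof (rule prod_mono_strict[of 0])
    show "0 < cmod (x - root i)" if "i \<in> {..<degree p}" for i
      using root_far[of i] that assms(3) by (simp del: zero_less_norm_iff)
  qed (use root_far assms(1,3) in \<open>auto intro: less_imp_le\<close>)
  also have "\<dots> \<le> norm (lead_coeff p) * (\<Prod>i<degree p. cmod (x - root i))"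
    using mult_right_mono[OF assms(2), of "\<Prod>i<degree p. cmod (x - root i)"]
    by (simp add: prod_nonneg)
  also have "\<dots> = cmod (poly p x)"
    by (simp add: poly_p norm_mult prod_norm)
  finally show ?thesis .
qed

lemma int_poly_roots_far:
  fixes f :: "int poly" and \<alpha> \<beta> :: real and x d :: int and z :: complex
  assumes "0 < \<alpha>"
    and j: "j \<le> degree f"
    and dom: "\<bar>real_of_int (coeff f j)\<bar> * \<alpha> ^ j >
              (\<beta> / \<alpha>) ^ (degree f - j) *
              (\<Sum>i\<in>{0..degree f} - {j}. \<bar>real_of_int (coeff f i)\<bar> * \<alpha> ^ i)"
    and range: "\<alpha> + d \<le> x" "x \<le> \<beta> - d"
    and root: "poly (map_poly of_int f) z = 0"
  shows "cmod (of_int x - z) > d"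
proof -
  have "\<not> (\<alpha> \<le> cmod z \<and> cmod z \<le> \<beta>)"
    using poly_nonzero_in_annulus[of \<alpha> z \<beta> j "map_poly of_int f"] assms
    by (auto simp: degree_map_poly coeff_map_poly norm_of_int)
  moreover have "cmod (of_int x :: complex) = \<bar>real_of_int x\<bar>"
    by (rule norm_of_int)
  moreover have "\<bar>cmod (of_int x) - cmod z\<bar> \<le> cmod (of_int x - z)"
    by (rule norm_triangle_ineq3)
  ultimately show ?thesis
    using range \<open>0 < \<alpha>\<close> by linarith
qed

lemma int_factor_value_gt:
  fixes f g h :: "int poly" and \<alpha> \<beta> :: real and x d :: int
  assumes "0 < \<alpha>"
    and j: "j \<le> degree f"
    and dom: "\<bar>real_of_int (coeff f j)\<bar> * \<alpha> ^ j >
              (\<beta> / \<alpha>) ^ (degree f - j) *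
              (\<Sum>i\<in>{0..degree f} - {j}. \<bar>real_of_int (coeff f i)\<bar> * \<alpha> ^ i)"
    and d: "d \<ge> 1"
    and range: "\<alpha> + d \<le> x" "x \<le> \<beta> - d"
    and factor: "f = g * h" and deg: "degree g \<ge> 1"
  shows "d < \<bar>poly g x\<bar>"
proof -
  let ?G = "map_poly of_int g :: complex poly"
  have "\<bar>lead_coeff g\<bar> \<ge> 1"
    using deg by (auto simp: int_one_le_iff_zero_less)
  then have "norm (lead_coeff ?G) \<ge> 1"
    by (simp add: degree_map_poly coeff_map_poly norm_of_int flip: of_int_abs)
  moreover have "cmod (of_int x - z) > d" if "poly ?G z = 0" for z
    using that int_poly_roots_far[OF \<open>0 < \<alpha>\<close> j dom range]
    by (simp add: factor map_poly_of_int_mult)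
  ultimately have "d < cmod (poly ?G (of_int x))"
    using norm_poly_gt_if_roots_far[of ?G d "of_int x"] d deg
    by (simp add: degree_map_poly)
  then show ?thesis
    by (simp only: poly_map_poly_of_int norm_of_int)
qed

lemma prime_power_dvd_mult_cases:
  fixes p a b :: "'a::algebraic_semidom"
  assumes "prime_elem p" and "p ^ k dvd a * b" and "\<not> (p dvd a \<and> p dvd b)"
  shows "p ^ k dvd a \<or> p ^ k dvd b"
proof (cases "k = 0")
  case False
  from assms(3) consider "\<not> p dvd a" | "\<not> p dvd b"
    by blast
  then show ?thesis
  proof cases
    case 1
    with assms(1,2) False show ?thesis
      by (blast dest: prime_power_dvd_multD)
  next
    case 2
    moreover have "p ^ k dvd b * a"
      using assms(2) by (simp add: mult.commute)
    ultimately show ?thesis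
      using assms(1) False by (blast dest: prime_power_dvd_multD)
  qed
qed simp

lemma prime_power_dvd_factor_value:
  fixes g h :: "int poly" and q x :: int
  assumes "q dvd poly (g * h) x"
    and q: "prime q \<or> (\<exists>p k. prime p \<and> k \<ge> 1 \<and> q = p ^ k \<and>
                               coprime q \<bar>poly (pderiv (g * h)) x\<bar>)"
  shows "q dvd poly g x \<or> q dvd poly h x"
  using q
proof
  assume "prime q"
  with assms(1) show ?thesis by (simp add: prime_dvd_mult_iff)
next
  assume "\<exists>p k. prime p \<and> k \<ge> 1 \<and> q = p ^ k \<and> coprime q \<bar>poly (pderiv (g * h)) x\<bar>"
  then obtain p k where p: "prime p" "k \<ge> 1" "q = p ^ k"
    and coprime: "coprime q \<bar>poly (pderiv (g * h)) x\<bar>" by blast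
  have "\<not> (p dvd poly g x \<and> p dvd poly h x)"
  proof
    assume "p dvd poly g x \<and> p dvd poly h x"
    then have "p dvd \<bar>poly (pderiv (g * h)) x\<bar>"
      by (simp add: pderiv_mult)
    moreover have "p dvd q"
      using p by simp
    ultimately have "is_unit p"
      using coprime by (blast intro: coprime_common_divisor)
    with \<open>prime p\<close> show False by (simp add: not_prime_unit)
  qed
  moreover have "p ^ k dvd poly g x * poly h x"
    using assms(1) p(3) by simp
  ultimately show ?thesis
    using prime_power_dvd_mult_cases[OF prime_imp_prime_elem[OF \<open>prime p\<close>]] p(3) by blast
qed

lemma cofactor_le_if_dvd_mult_eq:
  fixes q d a b :: int
  assumes "q * d = a * b" and "q dvd a" and "0 < q" and "0 < d"
  shows "b \<le> d"
proof -
  obtain u where a: "a = q * u"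
    using \<open>q dvd a\<close> by blast
  with assms(1,3) have d: "d = u * b"
    by simp
  show ?thesis
  proof (cases "b > 0")
    case True
    with d \<open>0 < d\<close> have "u \<ge> 1"
      by (simp add: zero_less_mult_iff)
    with True d show ?thesis by simp
  qed (use \<open>0 < d\<close> in simp)
qed

lemma degree_pos_if_dvd_primitive:
  fixes f g :: "'a::{semiring_gcd,idom_divide} poly"
  assumes "content f = 1" and "g dvd f" and "\<not> is_unit g"
  shows "degree g > 0"
proof (rule ccontr)
  assume "\<not> degree g > 0"
  then obtain c where g: "g = [:c:]"
    by (auto elim: degree_eq_zeroE)
  have "content g = 1"
    using content_dvd_contentI[OF \<open>g dvd f\<close>] \<open>content f = 1\<close> by simp
  with g have "is_unit c"
    by (simp add: normalize_1_iff)
  with g \<open>\<not> is_unit g\<close> show False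
    by (simp add: is_unit_const_poly_iff)
qed

lemma irreducible_if_value_quotient_prime_power:
  fixes f :: "int poly" and x d q :: int
  assumes primitive: "content f = 1" and "0 < d"
    and quotient: "q * d = \<bar>poly f x\<bar>"
    and q: "prime q \<or> (\<exists>p k. prime p \<and> k \<ge> 1 \<and> q = p ^ k \<and>
                                coprime q \<bar>poly (pderiv f) x\<bar>)"
    and large: "\<And>g h. f = g * h \<Longrightarrow> degree g \<ge> 1 \<Longrightarrow> d < \<bar>poly g x\<bar>"
  shows "irreducible f"
proof (rule irreducibleI)
  have "q > 1"
    using q
  proof
    assume "\<exists>p k. prime p \<and> k \<ge> 1 \<and> q = p ^ k \<and> coprime q \<bar>poly (pderiv f) x\<bar>"
    then obtain p k where "prime p" "k \<ge> 1" "q = p ^ k"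
      by blast
    then show ?thesis
      using one_less_power[OF prime_gt_1_int[OF \<open>prime p\<close>]] by simp
  qed (rule prime_gt_1_int)
  show "f \<noteq> 0"
    using primitive by auto
  show "\<not> is_unit f"
  proof
    assume "is_unit f"
    then have "\<bar>poly f x\<bar> = 1"
      by (auto simp: is_unit_poly_iff)
    with quotient \<open>q > 1\<close> \<open>0 < d\<close> show False
      by (simp add: pos_zmult_eq_1_iff)
  qed
  fix g h
  assume factor: "f = g * h"
  show "is_unit g \<or> is_unit h"
  proof (rule ccontr)
    assume "\<not> (is_unit g \<or> is_unit h)"
    then have "degree g \<ge> 1" "degree h \<ge> 1"
      using degree_pos_if_dvd_primitive[OF primitive] factor by (auto simp: Suc_le_eq)
    then have g: "d < \<bar>poly g x\<bar>" and h: "d < \<bar>poly h x\<bar>"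
      using large[OF factor] large[of h g] factor by (simp_all add: mult.commute)
    have "q dvd poly f x"
      using quotient by (metis dvd_abs_iff dvd_triv_left)
    then have "q dvd poly g x \<or> q dvd poly h x"
      using prime_power_dvd_factor_value q factor by blast
    moreover have "q * d = \<bar>poly g x\<bar> * \<bar>poly h x\<bar>"
      using quotient factor by (simp add: abs_mult)
    moreover have "q * d = \<bar>poly h x\<bar> * \<bar>poly g x\<bar>"
      using quotient factor by (simp add: abs_mult)
    ultimately show False
      using cofactor_le_if_dvd_mult_eq[of q d "\<bar>poly g x\<bar>" "\<bar>poly h x\<bar>"]
        cofactor_le_if_dvd_mult_eq[of q d "\<bar>poly h x\<bar>" "\<bar>poly g x\<bar>"] g h \<open>q > 1\<close> \<open>0 < d\<close>
      by auto
  qed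
qed

theorem corollary6:
  fixes f :: "int poly" and \<alpha> \<beta> :: real and j n d :: nat
  assumes primitive: "content f = 1"
    and pos: "0 < \<alpha>" "\<alpha> < \<beta>"
    and j: "j \<le> degree f"
    and dom: "\<bar>real_of_int (coeff f j)\<bar> * \<alpha> ^ j >
              (\<beta> / \<alpha>) ^ (degree f - j) *
              (\<Sum>i\<in>{0..degree f} - {j}. \<bar>real_of_int (coeff f i)\<bar> * \<alpha> ^ i)"
    and nd_pos: "n > 0" "d > 0"
    and range: "\<beta> - real d \<ge> real n" "real n \<ge> \<alpha> + real d"
    and dvd: "int d dvd \<bar>poly f (int n)\<bar>"
    and val: "prime (\<bar>poly f (int n)\<bar> div int d) \<or>
              (\<exists>p k. prime (p::int) \<and> k \<ge> 1 \<and> \<bar>poly f (int n)\<bar> div int d = p ^ k \<and>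
                      coprime (\<bar>poly f (int n)\<bar> div int d) \<bar>poly (pderiv f) (int n)\<bar>)"
  shows "irreducible f"
proof (rule irreducible_if_value_quotient_prime_power[OF primitive _ _ val])
  show "0 < int d"
    using nd_pos by simp
  show "\<bar>poly f (int n)\<bar> div int d * int d = \<bar>poly f (int n)\<bar>"
    using dvd by simp
  show "int d < \<bar>poly g (int n)\<bar>" if "f = g * h" "degree g \<ge> 1" for g h
    using int_factor_value_gt[OF pos(1) j dom _ _ _ that] nd_pos range by simp
qed

end
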